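(* Fix a nonempty compact set $C_0\subset\mathbb{R}_+^{n-1}$. There exist $\epsilon>0$ and a probability measure $\nu$ on $\mathbb{R}_+^{n-1}$ such that for every $t>0$ there is $c(t)>0$ with $$\mathbb{P}^t(\mathbf{y},A)\ge\epsilon\,c(t)\,\nu(A)\quad\text{for all }\mathbf{y}\in C_0\text{ and all Borel }A\subseteq\mathbb{R}_+^{n-1}.$$ Moreover $\inf_{t\in[a,b]}c(t)>0$ for every $0<a\le b<\infty$.
   Context: Fix $n\ge 2$ and a probability law $\theta$ on $(0,\infty)$ with mean $1$. The $n$-particle Stochastic Follow-the-Leader system $\mathbf{X}=(X_1,\dots,X_n)$ on $\mathbb{R}$, $X_n<\dots<X_1$, evolves as a pure jump Markov process: the leader $X_1$ jumps forward at rate $1$ with i.i.d. jump sizes of law $\theta$; for $i\ge2$, $X_i$ jumps at rate $X_{i-1}-X_i$ to a uniform location in $(X_i,X_{i-1})$. The gap process $\mathbf{Y}$, $Y_i=X_i-X_{i+1}$, is Markov on $\mathbb{R}_+^{n-1}$; $\mathbb{P}^t(\mathbf{y},A)=\mathbb{P}_{\mathbf{y}}(\mathbf{Y}(t)\in A)$. *)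

theory Defs
  imports "HOL-Probability.Probability"
begin

text \<open>Gap vectors of the n-particle SFL system: m = n - 1 gaps, stored as
  extensional functions on indices 0..m-1 (index i is the gap Y_(i+1) = X_(i+1) - X_(i+2)).\<close>

definition gap_space :: "nat \<Rightarrow> (nat \<Rightarrow> real) measure" where
  "gap_space m = PiM {..<m} (\<lambda>_. borel)"

definition pos_orthant :: "nat \<Rightarrow> (nat \<Rightarrow> real) set" where
  "pos_orthant m = {y \<in> space (gap_space m). \<forall>i<m. 0 < y i}"

text \<open>Total jump rate from gap state y: leader rate 1 plus rate Y_i for particle i+1.\<close>
definition total_rate :: "nat \<Rightarrow> (nat \<Rightarrow> real) \<Rightarrow> real" where
  "total_rate m y = 1 + (\<Sum>i<m. y i)"

definition lead_jump :: "(nat \<Rightarrow> real) \<Rightarrow> real \<Rightarrow> (nat \<Rightarrow> real)" where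
  "lead_jump y J = y(0 := y 0 + J)"

text \<open>Particle behind gap i jumps to the uniform location X + u * Y_i (u in (0,1)).\<close>
definition fol_jump :: "nat \<Rightarrow> nat \<Rightarrow> real \<Rightarrow> (nat \<Rightarrow> real) \<Rightarrow> (nat \<Rightarrow> real)" where
  "fol_jump m i u y =
     (if Suc i < m then y(i := (1 - u) * y i, Suc i := y (Suc i) + u * y i)
      else y(i := (1 - u) * y i))"

text \<open>Rate operator (unnormalised jump kernel) applied to a nonnegative function f.\<close>
definition rate_op :: "real measure \<Rightarrow> nat \<Rightarrow> ((nat \<Rightarrow> real) \<Rightarrow> ennreal) \<Rightarrow> (nat \<Rightarrow> real) \<Rightarrow> ennreal" where
  "rate_op \<theta> m f y =
     (\<integral>\<^sup>+ J. f (lead_jump y J) \<partial>\<theta>) +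
     (\<Sum>i<m. ennreal (y i) * (\<integral>\<^sup>+ u. indicator {0<..<1} u * f (fol_jump m i u y) \<partial>lborel))"

text \<open>Probability of being in A at time t after exactly k jumps (pure jump construction).\<close>
fun sfl_pk :: "real measure \<Rightarrow> nat \<Rightarrow> nat \<Rightarrow> real \<Rightarrow> (nat \<Rightarrow> real) \<Rightarrow> (nat \<Rightarrow> real) set \<Rightarrow> ennreal" where
  "sfl_pk \<theta> m 0 t y A = ennreal (exp (- total_rate m y * t)) * indicator A y"
| "sfl_pk \<theta> m (Suc k) t y A =
     (\<integral>\<^sup>+ s. indicator {0..t} s * ennreal (exp (- total_rate m y * s))
               * rate_op \<theta> m (\<lambda>z. sfl_pk \<theta> m k (t - s) z A) y \<partial>lborel)"

definition sfl_kernel :: "real measure \<Rightarrow> nat \<Rightarrow> real \<Rightarrow> (nat \<Rightarrow> real) \<Rightarrow> (nat \<Rightarrow> real) set \<Rightarrow> ennreal" where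
  "sfl_kernel \<theta> n t y A = (\<Sum>k. sfl_pk \<theta> (n - 1) k t y A)"

end

theory Submission
  imports Defs
begin

(* Starting from y, let
   the followers behind gaps 0, 1, ..., m - 1 jump once each, in this order, and nothing else happen
   before time t. The follower behind gap i jumps at rate y_i to a uniform position, so the new
   value of that gap has intensity 1 on (0, y_i), which contains (0, delta) when all gaps on C0 are
   at least delta (a jump only enlarges the gap behind it). If R bounds the total jump rate on C0
   (follower jumps never increase it), integrating over the m jump times gives
   P^t(y, A) >= exp (- R t) (delta t)^m / m! * nu(A), with nu the uniform law on (0, delta)^m. *)

lemma sum_fun_upd:
  fixes f :: "'a \<Rightarrow> 'b::ab_group_add"
  assumes "finite S" "a \<in> S"
  shows "sum (f(a := b)) S = sum f S - f a + b"
proof -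
  have "sum (f(a := b)) S = b + sum (f(a := b)) (S - {a})"
    using assms by (simp add: sum.remove)
  also have "sum (f(a := b)) (S - {a}) = sum f (S - {a})"
    by (rule sum.cong) auto
  finally show ?thesis
    using assms by (simp add: sum_diff1)
qed

lemma sum_fol_jump:
  assumes "i < m"
  shows "(\<Sum>j<m. fol_jump m i u y j) = (\<Sum>j<m. y j) - (if Suc i < m then 0 else u * y i)"
proof (cases "Suc i < m")
  case True
  then have "fol_jump m i u y = (y(i := (1 - u) * y i))(Suc i := y (Suc i) + u * y i)"
    by (simp add: fol_jump_def)
  with True assms show ?thesis
    by (simp only: sum_fun_upd finite_lessThan lessThan_iff) (simp add: algebra_simps)
next
  case False
  then have "fol_jump m i u y = y(i := (1 - u) * y i)"
    by (simp add: fol_jump_def)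
  with False assms show ?thesis
    by (simp only: sum_fun_upd finite_lessThan lessThan_iff) (simp add: algebra_simps)
qed

lemma total_rate_fol_jump_le:
  "i < m \<Longrightarrow> 0 \<le> u \<Longrightarrow> 0 \<le> y i \<Longrightarrow> total_rate m (fol_jump m i u y) \<le> total_rate m y"
  by (simp add: total_rate_def sum_fol_jump)

lemma space_gap_space: "space (gap_space m) = {y. \<forall>j\<ge>m. y j = undefined}"
  by (auto simp: gap_space_def space_PiM PiE_def extensional_def)

lemma fol_jump_lessThan_Suc:
  "j < Suc i \<Longrightarrow> fol_jump m i u y j = (y(i := (1 - u) * y i)) j"
  by (auto simp: fol_jump_def)

definition gap_invariant :: "nat \<Rightarrow> real \<Rightarrow> real \<Rightarrow> nat \<Rightarrow> (nat \<Rightarrow> real) \<Rightarrow> bool" where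
  "gap_invariant m \<delta> R i y \<longleftrightarrow> y \<in> space (gap_space m) \<and> (\<forall>j<m. 0 \<le> y j) \<and>
     (\<forall>j. i \<le> j \<and> j < m \<longrightarrow> \<delta> \<le> y j) \<and> total_rate m y \<le> R"

lemma gap_invariant_fol_jump:
  assumes "gap_invariant m \<delta> R i y" "i < m" "0 \<le> u" "u \<le> 1"
  shows "gap_invariant m \<delta> R (Suc i) (fol_jump m i u y)"
proof -
  have "0 \<le> y i"
    using assms by (simp add: gap_invariant_def)
  then have "y j \<le> fol_jump m i u y j" if "j \<noteq> i" for j
    using that assms(3) by (auto simp: fol_jump_def)
  moreover have "\<delta> \<le> y j" if "Suc i \<le> j" "j < m" for j
    using that assms(1) by (simp add: gap_invariant_def)
  ultimately have "\<forall>j. Suc i \<le> j \<and> j < m \<longrightarrow> \<delta> \<le> fol_jump m i u y j"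
    by (metis Suc_n_not_le_n order_trans)
  moreover have "fol_jump m i u y \<in> space (gap_space m)"
    using assms by (auto simp: gap_invariant_def space_gap_space fol_jump_def)
  moreover have "\<forall>j<m. 0 \<le> fol_jump m i u y j"
    using assms by (auto simp: gap_invariant_def fol_jump_def)
  moreover have "total_rate m (fol_jump m i u y) \<le> total_rate m y"
    using total_rate_fol_jump_le[of i m u y] assms(2,3) \<open>0 \<le> y i\<close> by blast
  ultimately show ?thesis
    using assms(1) by (auto simp: gap_invariant_def)
qed

lemma measurable_override_on_lessThan:
  assumes "i \<le> m"
  shows "(\<lambda>x. override_on x y {..<i}) \<in> PiM {i..<m} (\<lambda>_. borel) \<rightarrow>\<^sub>M gap_space m"
  unfolding gap_space_def
proof (rule measurable_PiM_single')
  fix j assume "j \<in> {..<m}"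
  then show "(\<lambda>x. override_on x y {..<i} j) \<in> borel_measurable (PiM {i..<m} (\<lambda>_. borel))"
    by (cases "j < i") auto
qed (use assms in \<open>auto simp: space_PiM PiE_def extensional_def override_on_def\<close>)

lemma measurable_override_on_lessThan_Suc:
  assumes "i < m"
  shows "(\<lambda>p. override_on (snd p) (y(i := fst p)) {..<Suc i})
    \<in> borel \<Otimes>\<^sub>M PiM {Suc i..<m} (\<lambda>_. borel) \<rightarrow>\<^sub>M gap_space m"
  unfolding gap_space_def
proof (rule measurable_PiM_single')
  fix j assume "j \<in> {..<m}"
  then show "(\<lambda>p. override_on (snd p) (y(i := fst p)) {..<Suc i} j)
    \<in> borel_measurable (borel \<Otimes>\<^sub>M PiM {Suc i..<m} (\<lambda>_. borel))"
    by (cases "j < i"; cases "j = i") auto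
qed (use assms in \<open>auto simp: space_PiM PiE_def extensional_def override_on_def space_pair_measure\<close>)

definition resample_prob :: "real \<Rightarrow> nat \<Rightarrow> nat \<Rightarrow> (nat \<Rightarrow> real) \<Rightarrow> (nat \<Rightarrow> real) set \<Rightarrow> ennreal" where
  "resample_prob \<delta> m i y A =
     (\<integral>\<^sup>+x. indicator A (override_on x y {..<i}) \<partial>PiM {i..<m} (\<lambda>_. uniform_measure lborel {0<..<\<delta>}))"

lemma prob_space_uniform_interval: "0 < \<delta> \<Longrightarrow> prob_space (uniform_measure lborel {0<..<\<delta>::real})"
  by (rule prob_space_uniform_measure) auto

lemma sets_PiM_uniform_interval:
  "sets (PiM I (\<lambda>_. uniform_measure lborel {0<..<\<delta>::real})) = sets (PiM I (\<lambda>_. borel))"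
  by (rule sets_PiM_cong) auto

lemma product_sigma_finite_uniform_interval:
  "0 < \<delta> \<Longrightarrow> product_sigma_finite (\<lambda>_::nat. uniform_measure lborel {0<..<\<delta>::real})"
  using product_prob_spaceI[of "\<lambda>_::nat. uniform_measure lborel {0<..<\<delta>}"] prob_space_uniform_interval
  unfolding product_prob_space_def by blast

lemma resample_prob_cong:
  "(\<And>j. j < i \<Longrightarrow> y j = y' j) \<Longrightarrow> resample_prob \<delta> m i y A = resample_prob \<delta> m i y' A"
proof -
  assume "\<And>j. j < i \<Longrightarrow> y j = y' j"
  then have "override_on x y {..<i} = override_on x y' {..<i}" for x
    by (auto simp: override_on_def)
  then show ?thesis
    by (simp add: resample_prob_def)
qed

lemma resample_prob_eq_indicator:
  assumes "y \<in> space (gap_space m)"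
  shows "resample_prob \<delta> m m y A = indicator A y"
proof -
  have "override_on (\<lambda>_. undefined) y {..<m} = y"
    using assms by (auto simp: override_on_def space_gap_space)
  then show ?thesis
    by (simp add: resample_prob_def PiM_empty nn_integral_count_space_finite)
qed

lemma resample_prob_0:
  assumes "A \<in> sets (gap_space m)"
  shows "resample_prob \<delta> m 0 y A = emeasure (PiM {..<m} (\<lambda>_. uniform_measure lborel {0<..<\<delta>})) A"
  using assms
  by (simp add: resample_prob_def atLeast0LessThan sets_PiM_uniform_interval gap_space_def)

context
  fixes \<delta> :: real and m i :: nat and A :: "(nat \<Rightarrow> real) set"
  assumes \<delta>: "0 < \<delta>" and i: "i < m" and A: "A \<in> sets (gap_space m)"
begin

lemma measurable_resample_prob_Suc:
  "(\<lambda>z. resample_prob \<delta> m (Suc i) (y(i := z)) A) \<in> borel_measurable borel"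
  unfolding resample_prob_def
proof (rule sigma_finite_measure.borel_measurable_nn_integral)
  show "sigma_finite_measure (PiM {Suc i..<m} (\<lambda>_. uniform_measure lborel {0<..<\<delta>}))"
    using \<delta> by (intro prob_space_imp_sigma_finite prob_space_PiM prob_space_uniform_interval)
  have "(\<lambda>p. indicator A (override_on (snd p) (y(i := fst p)) {..<Suc i}) :: ennreal)
    \<in> borel_measurable (borel \<Otimes>\<^sub>M PiM {Suc i..<m} (\<lambda>_. borel))"
    using measurable_override_on_lessThan_Suc[OF i] A by measurable
  then show "(\<lambda>(z, x). indicator A (override_on x (y(i := z)) {..<Suc i}) :: ennreal)
    \<in> borel_measurable (borel \<Otimes>\<^sub>M PiM {Suc i..<m} (\<lambda>_. uniform_measure lborel {0<..<\<delta>}))"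
    by (simp add: case_prod_beta'
        cong: measurable_cong_sets[OF sets_pair_measure_cong[OF refl sets_PiM_uniform_interval] refl])
qed

lemma resample_prob_Suc:
  "resample_prob \<delta> m i y A
     = (\<integral>\<^sup>+z. resample_prob \<delta> m (Suc i) (y(i := z)) A \<partial>uniform_measure lborel {0<..<\<delta>})"
proof -
  let ?U = "uniform_measure lborel {0<..<\<delta>}"
  have I: "{i..<m} = insert i {Suc i..<m}"
    using i by auto
  have meas: "(\<lambda>x. indicator A (override_on x y {..<i}) :: ennreal)
    \<in> borel_measurable (PiM (insert i {Suc i..<m}) (\<lambda>_. ?U))"
    using measurable_override_on_lessThan[OF less_imp_le[OF i], of y] A
    unfolding I[symmetric] measurable_cong_sets[OF sets_PiM_uniform_interval refl] by measurable
  have "resample_prob \<delta> m i y A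
    = (\<integral>\<^sup>+z. (\<integral>\<^sup>+x. indicator A (override_on (x(i := z)) y {..<i}) \<partial>PiM {Suc i..<m} (\<lambda>_. ?U)) \<partial>?U)"
    unfolding resample_prob_def I
    by (rule product_sigma_finite.product_nn_integral_insert_rev
        [OF product_sigma_finite_uniform_interval[OF \<delta>] _ _ meas]) auto
  moreover have "override_on (x(i := z)) y {..<i} = override_on x (y(i := z)) {..<Suc i}" for x z
    by (auto simp: override_on_def fun_eq_iff)
  ultimately show ?thesis
    by (simp add: resample_prob_def)
qed

(* A follower jump turns a gap w into (1 - u) w with u uniform on (0, 1); after the substitution
   z = (1 - u) w this is Lebesgue measure on (0, w), which contains (0, delta). *)
lemma resample_prob_le_follower_integral:
  assumes "\<delta> \<le> w"
  shows "ennreal \<delta> * resample_prob \<delta> m i y A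
    \<le> ennreal w * (\<integral>\<^sup>+u. indicator {0<..<1} u * resample_prob \<delta> m (Suc i) (y(i := (1 - u) * w)) A \<partial>lborel)"
proof -
  let ?H = "\<lambda>z. resample_prob \<delta> m (Suc i) (y(i := z)) A"
  have H: "?H \<in> borel_measurable borel"
    by (rule measurable_resample_prob_Suc)
  have w: "0 < w"
    using assms \<delta> by simp
  have "resample_prob \<delta> m i y A = (\<integral>\<^sup>+z. ?H z * indicator {0<..<\<delta>} z \<partial>lborel) / emeasure lborel {0<..<\<delta>}"
    unfolding resample_prob_Suc by (rule nn_integral_uniform_measure) (use H in auto)
  also have "\<dots> = (\<integral>\<^sup>+z. indicator {0<..<\<delta>} z * ?H z \<partial>lborel) / ennreal \<delta>"
    using \<delta> by (simp add: mult.commute)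
  finally have "resample_prob \<delta> m i y A = (\<integral>\<^sup>+z. indicator {0<..<\<delta>} z * ?H z \<partial>lborel) / ennreal \<delta>" .
  then have "ennreal \<delta> * resample_prob \<delta> m i y A = (\<integral>\<^sup>+z. indicator {0<..<\<delta>} z * ?H z \<partial>lborel)"
    using \<delta> by (simp add: ennreal_times_divide mult.commute[of "ennreal \<delta>"] ennreal_mult_divide_eq)
  also have "\<dots> \<le> (\<integral>\<^sup>+z. indicator {0<..<w} z * ?H z \<partial>lborel)"
    using assms by (intro nn_integral_mono) (auto simp: indicator_def)
  also have "\<dots> = ennreal w * (\<integral>\<^sup>+u. indicator {0<..<1} u * ?H ((1 - u) * w) \<partial>lborel)"
  proof -
    have "indicator {0<..<w} ((1 - u) * w) = (indicator {0<..<1} u :: ennreal)" for u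
      using w by (auto simp: indicator_def algebra_simps zero_less_mult_iff mult_less_cancel_left1)
    moreover have "w + - w * u = (1 - u) * w" for u
      by (simp add: algebra_simps)
    moreover have "(\<integral>\<^sup>+z. indicator {0<..<w} z * ?H z \<partial>lborel)
      = ennreal \<bar>- w\<bar> * (\<integral>\<^sup>+u. indicator {0<..<w} (w + - w * u) * ?H (w + - w * u) \<partial>lborel)"
      using H w by (intro nn_integral_real_affine) auto
    ultimately show ?thesis
      using w by (simp only: abs_minus_cancel abs_of_pos)
  qed
  finally show ?thesis .
qed

end

lemma rate_op_ge_follower:
  assumes "i < m"
  shows "ennreal (y i) * (\<integral>\<^sup>+u. indicator {0<..<1} u * f (fol_jump m i u y) \<partial>lborel) \<le> rate_op \<theta> m f y"
proof -
  have "ennreal (y i) * (\<integral>\<^sup>+u. indicator {0<..<1} u * f (fol_jump m i u y) \<partial>lborel)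
     \<le> (\<Sum>i<m. ennreal (y i) * (\<integral>\<^sup>+u. indicator {0<..<1} u * f (fol_jump m i u y) \<partial>lborel))"
    using assms by (intro member_le_sum) auto
  then show ?thesis
    unfolding rate_op_def by (simp add: add_increasing)
qed

lemma rate_op_ge_resample_prob:
  assumes \<delta>: "0 < \<delta>" and i: "i < m" and A: "A \<in> sets (gap_space m)"
    and "\<delta> \<le> y i" "0 \<le> c"
    and next_jumps: "\<And>u. 0 < u \<Longrightarrow> u < 1 \<Longrightarrow>
      ennreal c * resample_prob \<delta> m (Suc i) (fol_jump m i u y) A \<le> f (fol_jump m i u y)"
  shows "ennreal (\<delta> * c) * resample_prob \<delta> m i y A \<le> rate_op \<theta> m f y"
proof -
  let ?H = "\<lambda>u. resample_prob \<delta> m (Suc i) (y(i := (1 - u) * y i)) A"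
  have H: "?H \<in> borel_measurable borel"
    using measurable_resample_prob_Suc[OF \<delta> i A] by measurable
  have fol: "resample_prob \<delta> m (Suc i) (fol_jump m i u y) A = ?H u" for u
    by (rule resample_prob_cong) (simp add: fol_jump_lessThan_Suc)
  have "ennreal (\<delta> * c) * resample_prob \<delta> m i y A = ennreal c * (ennreal \<delta> * resample_prob \<delta> m i y A)"
    using assms by (simp add: ennreal_mult mult_ac)
  also have "\<dots> \<le> ennreal c * (ennreal (y i) * (\<integral>\<^sup>+u. indicator {0<..<1} u * ?H u \<partial>lborel))"
    using resample_prob_le_follower_integral[OF \<delta> i A \<open>\<delta> \<le> y i\<close>] by (rule mult_left_mono) simp
  also have "\<dots> = ennreal (y i) * (\<integral>\<^sup>+u. indicator {0<..<1} u * (ennreal c * ?H u) \<partial>lborel)"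
    using H by (simp add: nn_integral_cmult[symmetric] mult_ac)
  also have "\<dots> \<le> ennreal (y i) * (\<integral>\<^sup>+u. indicator {0<..<1} u * f (fol_jump m i u y) \<partial>lborel)"
  proof (rule mult_left_mono[OF nn_integral_mono])
    fix u
    show "indicator {0<..<1} u * (ennreal c * ?H u) \<le> indicator {0<..<1} u * f (fol_jump m i u y)"
      using next_jumps[of u] unfolding fol by (simp split: split_indicator)
  qed simp
  also have "\<dots> \<le> rate_op \<theta> m f y"
    by (rule rate_op_ge_follower[OF i])
  finally show ?thesis .
qed

definition jump_weight :: "real \<Rightarrow> real \<Rightarrow> nat \<Rightarrow> real \<Rightarrow> real" where
  "jump_weight R \<delta> k t = exp (- R * t) * (\<delta> * t) ^ k / fact k"

lemma jump_weight_nonneg: "0 \<le> \<delta> \<Longrightarrow> 0 \<le> t \<Longrightarrow> 0 \<le> jump_weight R \<delta> k t"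
  by (simp add: jump_weight_def)

lemma nn_integral_jump_weight_Suc:
  assumes "0 \<le> t" "0 \<le> \<delta>"
  shows "(\<integral>\<^sup>+s. indicator {0..t} s * ennreal (exp (- R * s) * (\<delta> * jump_weight R \<delta> k (t - s))) \<partial>lborel)
    = ennreal (jump_weight R \<delta> (Suc k) t)"
proof -
  let ?K = "exp (- R * t) * \<delta> ^ Suc k"
  let ?F = "\<lambda>s. - (?K * (t - s) ^ Suc k / fact (Suc k))"
  have integrand: "exp (- R * s) * (\<delta> * jump_weight R \<delta> k (t - s)) = ?K * (t - s) ^ k / fact k" for s
  proof -
    have "exp (- R * s) * exp (- R * (t - s)) = exp (- R * t)"
      by (simp add: exp_add[symmetric] algebra_simps)
    moreover have "exp (- R * s) * (\<delta> * jump_weight R \<delta> k (t - s))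
      = (exp (- R * s) * exp (- R * (t - s))) * \<delta> ^ Suc k * (t - s) ^ k / fact k"
      by (simp add: jump_weight_def power_mult_distrib mult_ac)
    ultimately show ?thesis
      by simp
  qed
  moreover have "((\<lambda>s. ?K * (t - s) ^ k / fact k) has_integral (?F t - ?F 0)) {0..t}"
  proof (rule fundamental_theorem_of_calculus[OF assms(1)])
    fix s assume "s \<in> {0..t}"
    have "(?F has_real_derivative ?K * (t - s) ^ k / fact k) (at s within {0..t})"
      by (rule derivative_eq_intros refl | simp)+
    then show "(?F has_vector_derivative ?K * (t - s) ^ k / fact k) (at s within {0..t})"
      by (simp add: has_real_derivative_iff_has_vector_derivative)
  qed
  then have "(\<integral>\<^sup>+s. ennreal (?K * (t - s) ^ k / fact k) * indicator {0..t} s \<partial>lborel)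
    = ennreal (?K * t ^ Suc k / fact (Suc k))"
    using assms by (intro nn_integral_has_integral_lebesgue') auto
  moreover have "?K * t ^ Suc k / fact (Suc k) = jump_weight R \<delta> (Suc k) t"
    by (simp only: jump_weight_def power_mult_distrib mult_ac)
  ultimately show ?thesis
    by (simp only: integrand mult.commute[of "indicator {0..t} _"])
qed

lemma sfl_pk_Suc_ge:
  assumes "total_rate m y \<le> R" "0 \<le> t" "0 \<le> \<delta>"
    and first_jump: "\<And>s. s \<in> {0..t} \<Longrightarrow>
      ennreal (\<delta> * jump_weight R \<delta> k (t - s)) * G \<le> rate_op \<theta> m (\<lambda>z. sfl_pk \<theta> m k (t - s) z A) y"
  shows "ennreal (jump_weight R \<delta> (Suc k) t) * G \<le> sfl_pk \<theta> m (Suc k) t y A"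
proof -
  have "ennreal (jump_weight R \<delta> (Suc k) t) * G
    = (\<integral>\<^sup>+s. indicator {0..t} s * ennreal (exp (- R * s) * (\<delta> * jump_weight R \<delta> k (t - s))) \<partial>lborel) * G"
    by (simp only: nn_integral_jump_weight_Suc[OF assms(2,3)])
  also have "\<dots> = (\<integral>\<^sup>+s. indicator {0..t} s * ennreal (exp (- R * s) * (\<delta> * jump_weight R \<delta> k (t - s))) * G \<partial>lborel)"
    by (rule nn_integral_multc[symmetric]) (simp add: jump_weight_def)
  also have "\<dots> \<le> (\<integral>\<^sup>+s. indicator {0..t} s * ennreal (exp (- total_rate m y * s))
      * rate_op \<theta> m (\<lambda>z. sfl_pk \<theta> m k (t - s) z A) y \<partial>lborel)"
  proof (rule nn_integral_mono)
    fix s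
    show "indicator {0..t} s * ennreal (exp (- R * s) * (\<delta> * jump_weight R \<delta> k (t - s))) * G
      \<le> indicator {0..t} s * ennreal (exp (- total_rate m y * s)) * rate_op \<theta> m (\<lambda>z. sfl_pk \<theta> m k (t - s) z A) y"
    proof (cases "s \<in> {0..t}")
      case True
      then have "exp (- R * s) \<le> exp (- total_rate m y * s)"
        using assms(1) by (simp add: mult_right_mono)
      moreover have "0 \<le> \<delta> * jump_weight R \<delta> k (t - s)"
        using True assms(3) by (simp add: jump_weight_nonneg)
      ultimately show ?thesis
        using True first_jump[OF True]
        by (simp add: ennreal_mult mult.assoc mult_mono)
    qed simp
  qed
  also have "\<dots> = sfl_pk \<theta> m (Suc k) t y A"
    by simp
  finally show ?thesis .
qed

lemma sfl_pk_ge_resample_prob: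
  assumes "0 < \<delta>" "A \<in> sets (gap_space m)"
    and "k \<le> m" "gap_invariant m \<delta> R (m - k) y" "0 \<le> t"
  shows "ennreal (jump_weight R \<delta> k t) * resample_prob \<delta> m (m - k) y A \<le> sfl_pk \<theta> m k t y A"
  using assms(3-)
proof (induction k arbitrary: y t)
  \<comment> \<open>With k jumps left, the followers behind gaps m - k, ..., m - 1 still jump, in this order.\<close>
  case 0
  then have "exp (- R * t) \<le> exp (- total_rate m y * t)"
    by (simp add: gap_invariant_def mult_right_mono)
  with 0 show ?case
    by (simp add: gap_invariant_def jump_weight_def resample_prob_eq_indicator mult_right_mono)
next
  case (Suc k)
  define i where "i = m - Suc k"
  have i: "i < m" "Suc i = m - k"
    using Suc.prems(1) by (auto simp: i_def)
  have "\<delta> \<le> y i" "total_rate m y \<le> R"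
    using Suc.prems(2) i by (auto simp: i_def gap_invariant_def)
  have next_jumps: "ennreal (jump_weight R \<delta> k (t - s)) * resample_prob \<delta> m (Suc i) (fol_jump m i u y) A
      \<le> sfl_pk \<theta> m k (t - s) (fol_jump m i u y) A"
    if "s \<in> {0..t}" "0 < u" "u < 1" for s u
    using Suc.IH[of "fol_jump m i u y" "t - s"] gap_invariant_fol_jump[of m \<delta> R i y u] Suc.prems that i
    by (simp add: i_def)
  show ?case
    unfolding i_def[symmetric]
  proof (rule sfl_pk_Suc_ge)
    fix s assume "s \<in> {0..t}"
    then show "ennreal (\<delta> * jump_weight R \<delta> k (t - s)) * resample_prob \<delta> m i y A
      \<le> rate_op \<theta> m (\<lambda>z. sfl_pk \<theta> m k (t - s) z A) y"
      using assms(1,2) i(1) \<open>\<delta> \<le> y i\<close> next_jumps jump_weight_nonneg[of \<delta> "t - s" R k]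
      by (intro rate_op_ge_resample_prob) auto
  qed (use \<open>total_rate m y \<le> R\<close> Suc.prems assms in auto)
qed

lemma sfl_kernel_ge_uniform_box:
  assumes "0 < \<delta>" "A \<in> sets (gap_space m)" "y \<in> pos_orthant m" "\<forall>j<m. \<delta> \<le> y j"
    "total_rate m y \<le> R" "0 \<le> t"
  shows "ennreal (jump_weight R \<delta> m t) * emeasure (PiM {..<m} (\<lambda>_. uniform_measure lborel {0<..<\<delta>})) A
    \<le> sfl_kernel \<theta> (Suc m) t y A"
proof -
  have "gap_invariant m \<delta> R 0 y"
    using assms(3-5) by (auto simp: gap_invariant_def pos_orthant_def less_imp_le)
  then have "ennreal (jump_weight R \<delta> m t) * resample_prob \<delta> m 0 y A \<le> sfl_pk \<theta> m m t y A"
    using sfl_pk_ge_resample_prob[OF assms(1,2) order_refl, of R y t \<theta>] assms(6) by simp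
  also have "\<dots> \<le> (\<Sum>k. sfl_pk \<theta> m k t y A)"
    using sum_le_suminf[OF summableI, of "{m}" "\<lambda>k. sfl_pk \<theta> m k t y A"] by simp
  finally show ?thesis
    using assms(2) by (simp add: resample_prob_0 sfl_kernel_def)
qed

lemma emeasure_uniform_box_pos_orthant:
  assumes "0 < \<delta>"
  shows "emeasure (PiM {..<m} (\<lambda>_. uniform_measure lborel {0<..<\<delta>})) (pos_orthant m) = 1"
proof -
  have "pos_orthant m = PiE {..<m} (\<lambda>_. {0<..})"
    by (auto simp: pos_orthant_def gap_space_def space_PiM PiE_def)
  moreover have "emeasure (uniform_measure lborel {0<..<\<delta>}) {0<..} = 1"
    using assms by (simp add: emeasure_uniform_measure Int_absorb2 ennreal_divide_self subset_eq)
  ultimately show ?thesis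
    by (simp add: product_sigma_finite.emeasure_PiM[OF product_sigma_finite_uniform_interval[OF assms]])
qed

lemma compact_pos_orthant_bounded_below:
  assumes "compact C" "C \<subseteq> pos_orthant m"
  shows "\<exists>\<delta>>0. \<forall>y\<in>C. \<forall>j<m. \<delta> \<le> y j"
proof -
  have "\<exists>d>0. \<forall>y\<in>C. d \<le> y j" if "j < m" for j
  proof (cases "C = {}")
    case False
    have "continuous_on C (\<lambda>y. y j)"
      by (rule continuous_on_subset[OF continuous_on_product_coordinates]) simp
    then obtain y0 where "y0 \<in> C" "\<forall>y\<in>C. y0 j \<le> y j"
      using continuous_attains_inf[OF assms(1) False] by blast
    moreover have "0 < y0 j"
      using \<open>y0 \<in> C\<close> assms(2) that by (auto simp: pos_orthant_def)
    ultimately show ?thesis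
      by blast
  qed (auto intro: exI[of _ 1])
  then obtain d where d: "\<And>j. j < m \<Longrightarrow> 0 < d j \<and> (\<forall>y\<in>C. d j \<le> y j)"
    by metis
  show ?thesis
  proof (intro exI[of _ "Min (insert 1 (d ` {..<m}))"] conjI ballI allI impI)
    show "0 < Min (insert 1 (d ` {..<m}))"
      using d by auto
    fix y j assume "y \<in> C" "j < m"
    then show "Min (insert 1 (d ` {..<m})) \<le> y j"
      using d[of j] by (meson Min_le finite_imageI finite_insert finite_lessThan image_eqI insertI2 lessThan_iff order_trans)
  qed
qed

lemma compact_total_rate_bounded:
  assumes "compact C"
  shows "\<exists>R\<ge>0. \<forall>y\<in>C. total_rate m y \<le> R"
proof -
  have "continuous_on C (total_rate m)"
    unfolding total_rate_def
    by (intro continuous_intros continuous_on_subset[OF continuous_on_product_coordinates]) simp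
  then have "bounded (total_rate m ` C)"
    using assms by (intro compact_imp_bounded compact_continuous_image)
  then obtain a where "\<forall>y\<in>C. \<bar>total_rate m y\<bar> \<le> a"
    by (auto simp: bounded_iff)
  then show ?thesis
    by (intro exI[of _ "max 0 a"]) auto
qed

lemma INF_jump_weight_pos:
  assumes "0 < \<delta>" "0 \<le> R" "0 < a" "a \<le> b"
  shows "0 < (INF t\<in>{a..b}. jump_weight R \<delta> k t)"
proof -
  let ?L = "exp (- R * b) * (\<delta> * a) ^ k / fact k"
  have "?L \<le> jump_weight R \<delta> k t" if "t \<in> {a..b}" for t
    unfolding jump_weight_def
    using that assms by (intro divide_right_mono mult_mono power_mono) (auto simp: mult_left_mono)
  then have "?L \<le> (INF t\<in>{a..b}. jump_weight R \<delta> k t)"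
    using assms by (intro cINF_greatest) auto
  moreover have "0 < ?L"
    using assms by simp
  ultimately show ?thesis
    by linarith
qed

theorem lemma5p2:
  fixes \<theta> :: "real measure" and n :: nat and C0 :: "(nat \<Rightarrow> real) set"
  assumes "2 \<le> n"
    and "prob_space \<theta>" and "sets \<theta> = sets borel" and "AE x in \<theta>. 0 < x"
    and "integrable \<theta> (\<lambda>x. x)" and "(\<integral>x. x \<partial>\<theta>) = 1"
    and "compact C0" and "C0 \<noteq> {}" and "C0 \<subseteq> pos_orthant (n - 1)"
  shows "\<exists>\<epsilon>>0. \<exists>(\<nu> :: (nat \<Rightarrow> real) measure) (c :: real \<Rightarrow> real).
           prob_space \<nu> \<and> sets \<nu> = sets (gap_space (n - 1)) \<and>
           emeasure \<nu> (pos_orthant (n - 1)) = 1 \<and>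
           (\<forall>t>0. 0 < c t \<and>
              (\<forall>y\<in>C0. \<forall>A\<in>sets (gap_space (n - 1)). A \<subseteq> pos_orthant (n - 1) \<longrightarrow>
                  ennreal (\<epsilon> * c t) * emeasure \<nu> A \<le> sfl_kernel \<theta> n t y A)) \<and>
           (\<forall>a b. 0 < a \<and> a \<le> b \<longrightarrow> 0 < (INF t\<in>{a..b}. c t))"
proof -
  obtain m where n: "n = Suc m"
    using assms(1) by (cases n) auto
  obtain \<delta> where \<delta>: "0 < \<delta>" "\<forall>y\<in>C0. \<forall>j<m. \<delta> \<le> y j"
    using compact_pos_orthant_bounded_below[OF assms(7), where m = m] assms(9) n by auto
  obtain R where R: "0 \<le> R" "\<forall>y\<in>C0. total_rate m y \<le> R"
    using compact_total_rate_bounded[OF assms(7)] by blast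
  let ?\<nu> = "PiM {..<m} (\<lambda>_. uniform_measure lborel {0<..<\<delta>})"
  have "prob_space ?\<nu>"
    by (intro prob_space_PiM prob_space_uniform_interval \<delta>(1))
  moreover have "sets ?\<nu> = sets (gap_space m)"
    by (simp add: sets_PiM_uniform_interval gap_space_def)
  moreover have "0 < jump_weight R \<delta> m t" if "0 < t" for t
    using \<delta>(1) that by (simp add: jump_weight_def)
  ultimately show ?thesis
    using n \<delta> R assms(9) emeasure_uniform_box_pos_orthant[OF \<delta>(1)] INF_jump_weight_pos[OF \<delta>(1) R(1)]
      sfl_kernel_ge_uniform_box[OF \<delta>(1), of _ m _ R _ \<theta>]
    by (intro exI[of _ 1] conjI zero_less_one exI[of _ ?\<nu>] exI[of _ "jump_weight R \<delta> m"])
      (auto simp: less_imp_le subset_eq)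
qed

end
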